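(* Let $n_1,n_2\ge2$, $\tau\neq0$ real, $N'=(n_1+1)n_2$, $Q=K(n_1+1,n_2,0,\tau)$ and $e_1=(1,0,\dots,0)\in\mathbb{R}^{N'}$ (row vector). Then: (i) If $n_2$ is even, for every positive integer $s$ the vectors $e_1Q^s,e_1Q^{s+1},\dots,e_1Q^{s+N'-1}$ are linearly independent. (ii) If $n_2$ is odd, let $s\ge N'$, $\Lambda=\{e_1Q^2,\dots,e_1Q^{N'-1}\}$, $\Lambda_s=\Lambda\cup\{e_1Q^s\}$, and let $\bar M(s)$ be the matrix whose rows are $e_1Q^2,\dots,e_1Q^{N'-1},e_1Q^s$ in this order, with columns $\bar{\mathfrak C}_1(s),\dots,\bar{\mathfrak C}_{N'}(s)$. Then (a) $\Lambda$ is linearly independent while $\Lambda_s$ is linearly dependent; (b) $\bar{\mathfrak C}_1(s)$ lies in the span of the odd columns $\bar{\mathfrak C}_3(s),\bar{\mathfrak C}_5(s),\dots,\bar{\mathfrak C}_{n_2}(s)$; (c) $\bar{\mathfrak C}_{n_2+1}(s)$ lies in the span of the columns $\bar{\mathfrak C}_{n_2+3}(s),\bar{\mathfrak C}_{n_2+5}(s),\dots,\bar{\mathfrak C}_{2n_2}(s)$.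
   Context: Modified Kac matrix: for $m\ge1$, $y\in\mathbb{R}$, $\mathcal K(m,y)=(k_{ij})_{1\le i,j\le m}$ with $k_{i,i-1}=(m-i+1)y$, $k_{i,i+1}=i$, other entries $0$. Modified Kac matrix of second type: $K(m_1,m_2,x,y)$ is the $m_1m_2\times m_1m_2$ matrix of $m_2\times m_2$ blocks $K_{ij}$, $1\le i,j\le m_1$, with $K_{ii}=\mathcal K(m_2,y)$, $K_{i,i-1}=(m_1-i+1)x\,\mathcal I_{m_2}$, $K_{i,i+1}=i\,\mathcal I_{m_2}$, all other blocks zero. Thus $K(n_1+1,n_2,0,\tau)$ has diagonal blocks $\mathcal K(n_2,\tau)$, superdiagonal blocks $i\,\mathcal I_{n_2}$ and zero subdiagonal blocks. *)

theory Defs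
  imports "Jordan_Normal_Form.Matrix"
begin

text \<open>Matrices are 0-indexed in JNF. The paper's 1-indexed entry (i,j) is entry (i-1,j-1) here.\<close>

text \<open>Modified Kac matrix: k_{i,i-1} = (m-i+1) y, k_{i,i+1} = i (1-indexed).\<close>
definition kac :: "nat \<Rightarrow> real \<Rightarrow> real mat" where
  "kac m y = mat m m (\<lambda>(i,j).
      if j + 1 = i then real (m - i) * y
      else if j = i + 1 then real (i + 1)
      else 0)"

definition kac2 :: "nat \<Rightarrow> nat \<Rightarrow> real \<Rightarrow> real \<Rightarrow> real mat" where
  "kac2 m1 m2 x y = mat (m1 * m2) (m1 * m2) (\<lambda>(p,q).
      let bi = p div m2; a = p mod m2; bj = q div m2; b = q mod m2 in
      if bi = bj then kac m2 y $$ (a, b)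
      else if bj + 1 = bi then (if a = b then real (m1 - bi) * x else 0)
      else if bj = bi + 1 then (if a = b then real (bi + 1) else 0)
      else 0)"

definition lin_indep_list :: "nat \<Rightarrow> real vec list \<Rightarrow> bool" where
  "lin_indep_list n vs \<longleftrightarrow>
     (\<forall>c :: nat \<Rightarrow> real. (\<forall>k<n. (\<Sum>i<length vs. c i * (vs ! i) $ k) = 0)
        \<longrightarrow> (\<forall>i<length vs. c i = 0))"

definition in_span_list :: "nat \<Rightarrow> real vec \<Rightarrow> real vec list \<Rightarrow> bool" where
  "in_span_list n v ws \<longleftrightarrow>
     (\<exists>c :: nat \<Rightarrow> real. \<forall>k<n. v $ k = (\<Sum>i<length ws. c i * (ws ! i) $ k))"

definition e1Q :: "real mat \<Rightarrow> nat \<Rightarrow> real vec" where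
  "e1Q Q s = row (mat_of_row (unit_vec (dim_row Q) 0) * (Q ^\<^sub>m s)) 0"

end

theory Submission
  imports Defs "Jordan_Normal_Form.Determinant" "HOL-Computational_Algebra.Polynomial"
begin

text \<open>
  The matrix \<open>Q = K(m, n, 0, y)\<close> is block upper bidiagonal with diagonal blocks \<open>K = K(n, y)\<close>
  and superdiagonal blocks \<open>j I\<close>, and the two parts commute; hence block \<open>j\<close> of \<open>e\<^sub>1 Q\<^sup>t\<close> is
  \<open>binomial t j * j! * e\<^sub>1 K\<^bsup>t - j\<^esup>\<close>. On coefficient vectors of polynomials of degree \<open>< n\<close>
  the matrix \<open>K\<close> acts as the differential operator \<open>G \<mapsto> (1 - y x\<^sup>2) G' + (n - 1) y x G\<close>,
  whose eigenpolynomials \<open>(1 - a x)\<^sup>k (1 + a x)\<^bsup>n - 1 - k\<^esup>\<close> with \<open>a\<^sup>2 = y\<close> have the \<open>n\<close>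
  distinct eigenvalues \<open>a (n - 1 - 2 k)\<close>. Pairing a relation \<open>\<Sum> c\<^sub>l e\<^sub>1 Q\<^bsup>t\<^sub>l\<^esup> = 0\<close> with
  them shows that each eigenvalue is a root of multiplicity at least \<open>m\<close> of
  \<open>P = \<Sum> c\<^sub>l x\<^bsup>t\<^sub>l\<^esup>\<close>. Hence \<open>P = 0\<close> as soon as \<open>P\<close>, possibly after cancelling a power of
  \<open>x\<close> (allowed when no eigenvalue vanishes, i.e. for even \<open>n\<close>), has degree \<open>< m n\<close>.

  For odd \<open>n\<close> the eigenvalue \<open>0\<close> has the even eigenpolynomial \<open>(1 - y x\<^sup>2)\<^bsup>(n - 1) / 2\<^esup>\<close>. It
  expresses coordinate \<open>j n\<close> of every \<open>e\<^sub>1 Q\<^sup>t\<close> with \<open>t > j\<close> through the coordinates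
  \<open>j n + 2, j n + 4, \<dots>\<close>; for \<open>j = 0, 1\<close> this gives the column relations, and since two
  coordinates are determined by the others, any \<open>m n - 1\<close> such rows are dependent.
\<close>

section \<open>The Kac matrix as a differential operator\<close>

definition kac_elem :: "nat \<Rightarrow> 'a::comm_ring_1 \<Rightarrow> nat \<Rightarrow> nat \<Rightarrow> 'a" where
  "kac_elem n y i j =
     (if j + 1 = i then of_nat (n - i) * y else if j = i + 1 then of_nat (i + 1) else 0)"

lemma index_kac: "i < n \<Longrightarrow> j < n \<Longrightarrow> kac n y $$ (i, j) = kac_elem n y i j"
  by (simp add: kac_def kac_elem_def)

lemma of_real_kac_elem: "of_real (kac_elem n y i j) = kac_elem n (of_real y) i j"
  by (simp add: kac_elem_def)

lemma sum_kac_elem_mult: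
  fixes g :: "nat \<Rightarrow> 'a::comm_ring_1"
  assumes "i < n"
  shows "(\<Sum>j<n. kac_elem n y i j * g j) =
    (if 0 < i then of_nat (n - i) * y * g (i - 1) else 0)
    + (if i + 1 < n then of_nat (i + 1) * g (i + 1) else 0)"
proof -
  have "(\<Sum>j<n. kac_elem n y i j * g j) =
      (\<Sum>j<n. (if j = i - 1 \<and> 0 < i then of_nat (n - i) * y * g j else 0)
        + (if j = i + 1 then of_nat (i + 1) * g j else 0))"
    by (intro sum.cong) (auto simp: kac_elem_def)
  also have "\<dots> = (if 0 < i then of_nat (n - i) * y * g (i - 1) else 0)
      + (if i + 1 < n then of_nat (i + 1) * g (i + 1) else 0)"
    using assms by (simp add: sum.distrib sum.delta)
  finally show ?thesis .
qed

fun e1_kac_pow :: "nat \<Rightarrow> 'a::comm_ring_1 \<Rightarrow> nat \<Rightarrow> nat \<Rightarrow> 'a" where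
  "e1_kac_pow n y 0 i = (if i = 0 then 1 else 0)"
| "e1_kac_pow n y (Suc r) i = (\<Sum>j<n. e1_kac_pow n y r j * kac_elem n y j i)"

lemma of_real_e1_kac_pow:
  "of_real (e1_kac_pow n y r i) = (e1_kac_pow n (of_real y) r i :: 'a::{real_algebra_1, comm_ring_1})"
  by (induction r arbitrary: i) (simp_all add: of_real_kac_elem)

definition kac_diff_op :: "nat \<Rightarrow> 'a::idom \<Rightarrow> 'a poly \<Rightarrow> 'a poly" where
  "kac_diff_op n y G = [:1, 0, -y:] * pderiv G + [:0, of_nat (n - 1) * y:] * G"

lemma coeff_kac_diff_op:
  "coeff (kac_diff_op n y G) i = of_nat (Suc i) * coeff G (Suc i)
     + (if i = 0 then 0 else (of_nat (n - 1) - of_nat (i - 1)) * y * coeff G (i - 1))"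
proof -
  have "kac_diff_op n y G =
      pderiv G + pCons 0 (pCons 0 (smult (-y) (pderiv G))) + pCons 0 (smult (of_nat (n - 1) * y) G)"
    by (simp add: kac_diff_op_def mult_pCons_left)
  then show ?thesis
    by (cases i; cases "i - 1") (auto simp: coeff_pderiv algebra_simps)
qed

lemma sum_kac_elem_mult_coeff:
  fixes G :: "'a::idom poly"
  assumes "degree G < n" "i < n"
  shows "(\<Sum>j<n. kac_elem n y i j * coeff G j) = coeff (kac_diff_op n y G) i"
proof -
  have "(if i + 1 < n then of_nat (i + 1) * coeff G (i + 1) else 0) = of_nat (Suc i) * coeff G (Suc i)"
    using assms by (auto simp: coeff_eq_0)
  moreover have "0 < i \<Longrightarrow> of_nat (n - i) = (of_nat (n - 1) - of_nat (i - 1) :: 'a)"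
    using assms by (simp add: of_nat_diff)
  ultimately show ?thesis
    unfolding sum_kac_elem_mult[OF assms(2)] coeff_kac_diff_op by (simp add: mult_ac)
qed

lemma e1_kac_pow_eigen:
  fixes G :: "'a::idom poly"
  assumes "degree G < n" "kac_diff_op n y G = smult l G" "coeff G 0 = 1"
  shows "(\<Sum>i<n. e1_kac_pow n y r i * coeff G i) = l ^ r"
proof (induction r)
  case 0
  have "(\<Sum>i<n. e1_kac_pow n y 0 i * coeff G i) = (\<Sum>i<n. if i = 0 then coeff G 0 else 0)"
    by (intro sum.cong) auto
  moreover have "0 < n" using assms(1) by simp
  ultimately show ?case using assms(3) by simp
next
  case (Suc r)
  have "(\<Sum>i<n. e1_kac_pow n y (Suc r) i * coeff G i) =
      (\<Sum>i<n. \<Sum>j<n. e1_kac_pow n y r j * (kac_elem n y j i * coeff G i))"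
    by (simp add: sum_distrib_right mult.assoc)
  also have "\<dots> = (\<Sum>j<n. e1_kac_pow n y r j * (\<Sum>i<n. kac_elem n y j i * coeff G i))"
    by (subst sum.swap) (simp add: sum_distrib_left)
  also have "\<dots> = (\<Sum>j<n. e1_kac_pow n y r j * (l * coeff G j))"
    using assms by (intro sum.cong) (simp_all add: sum_kac_elem_mult_coeff)
  also have "\<dots> = l * (\<Sum>j<n. e1_kac_pow n y r j * coeff G j)"
    by (simp add: sum_distrib_left mult_ac)
  also have "\<dots> = l * l ^ r"
    using Suc by simp
  finally show ?case by simp
qed

lemma mult_pderiv_power: "p * pderiv (p ^ k) = smult (of_nat k) (p ^ k * pderiv p)"
proof (cases k)
  case (Suc j)
  have "p * pderiv (p ^ Suc j) = smult (of_nat (Suc j)) (p * p ^ j * pderiv p)"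
    unfolding pderiv_power_Suc by (simp only: mult_smult_left mult_smult_right mult.assoc)
  then show ?thesis
    unfolding Suc power_Suc .
qed simp

lemma kac_diff_op_eigen_iff:
  "kac_diff_op n y G = smult l G \<longleftrightarrow> [:1, 0, -y:] * pderiv G = G * [:l, - (of_nat (n - 1) * y):]"
proof -
  have eq: "G * [:l, - (of_nat (n - 1) * y):] = smult l G - [:0, of_nat (n - 1) * y:] * G"
    by (simp add: mult_pCons_right mult_pCons_left)
  show ?thesis
    unfolding kac_diff_op_def eq eq_diff_eq by (rule refl)
qed

definition kac_eigenpoly :: "'a::idom \<Rightarrow> nat \<Rightarrow> nat \<Rightarrow> 'a poly" where
  "kac_eigenpoly a n k = [:1, -a:] ^ k * [:1, a:] ^ (n - 1 - k)"

definition kac_eigenvalue :: "'a::idom \<Rightarrow> nat \<Rightarrow> nat \<Rightarrow> 'a" where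
  "kac_eigenvalue a n k = a * (of_nat (n - 1 - k) - of_nat k)"

lemma kac_diff_op_eigenpoly:
  assumes "a\<^sup>2 = y" "k < n"
  shows "kac_diff_op n y (kac_eigenpoly a n k) = smult (kac_eigenvalue a n k) (kac_eigenpoly a n k)"
proof -
  let ?A = "[:1, -a:]" and ?B = "[:1, a:]" and ?q = "n - 1 - k" and ?G = "kac_eigenpoly a n k"
  have AB: "[:1, 0, -y:] = ?A * ?B"
    using assms(1) by (simp add: power2_eq_square)
  have "[:1, 0, -y:] * pderiv ?G = ?B ^ ?q * ?B * (?A * pderiv (?A ^ k)) + ?A ^ k * ?A * (?B * pderiv (?B ^ ?q))"
    unfolding AB kac_eigenpoly_def pderiv_mult by (simp add: algebra_simps)
  also have "\<dots> = ?G * (smult (of_nat k) (?B * [:-a:]) + smult (of_nat ?q) (?A * [:a:]))"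
  proof -
    have "pderiv ?A = [:-a:]" "pderiv ?B = [:a:]"
      by (simp_all add: pderiv_pCons)
    then show ?thesis
      unfolding mult_pderiv_power
      by (simp only: kac_eigenpoly_def mult_smult_left mult_smult_right distrib_left mult_ac)
  qed
  also have "smult (of_nat k) (?B * [:-a:]) + smult (of_nat ?q) (?A * [:a:]) =
      [:kac_eigenvalue a n k, - (of_nat (n - 1) * y):]"
  proof -
    have "of_nat (n - 1) = (of_nat k + of_nat ?q :: 'a)"
      using assms(2) by (simp flip: of_nat_add)
    then show ?thesis
      using assms(1) by (simp add: kac_eigenvalue_def algebra_simps power2_eq_square)
  qed
  finally show ?thesis
    unfolding kac_diff_op_eigen_iff .
qed

lemma degree_kac_eigenpoly:
  assumes "k < n"
  shows "degree (kac_eigenpoly a n k) < n"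
proof -
  have "degree (kac_eigenpoly a n k) \<le> degree ([:1, -a:] ^ k) + degree ([:1, a:] ^ (n - 1 - k))"
    unfolding kac_eigenpoly_def by (rule degree_mult_le)
  also have "\<dots> \<le> k * 1 + (n - 1 - k) * 1"
    by (intro add_mono degree_power_le[THEN order_trans]) auto
  finally show ?thesis
    using assms by simp
qed

lemma coeff_0_kac_eigenpoly: "coeff (kac_eigenpoly a n k) 0 = 1"
  by (simp add: kac_eigenpoly_def coeff_mult_0 coeff_0_power)

lemma inj_on_kac_eigenvalue:
  fixes a :: "'a::{idom, ring_char_0}"
  assumes "a \<noteq> 0"
  shows "inj_on (kac_eigenvalue a n) {..<n}"
proof (rule inj_onI)
  fix k k' assume k: "k \<in> {..<n}" "k' \<in> {..<n}" and "kac_eigenvalue a n k = kac_eigenvalue a n k'"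
  then have "of_nat (n - 1 - k + k') = (of_nat (n - 1 - k' + k) :: 'a)"
    using assms by (simp add: kac_eigenvalue_def algebra_simps)
  then have "n - 1 - k + k' = n - 1 - k' + k"
    by (simp only: of_nat_eq_iff)
  then show "k = k'"
    using k by auto
qed

lemma kac_eigenvalue_nonzero:
  fixes a :: "'a::{idom, ring_char_0}"
  assumes "a \<noteq> 0" "even n" "k < n"
  shows "kac_eigenvalue a n k \<noteq> 0"
proof
  assume "kac_eigenvalue a n k = 0"
  then have "(of_nat (n - 1 - k) :: 'a) = of_nat k"
    using assms(1) by (simp add: kac_eigenvalue_def)
  then have "n - 1 - k = k"
    by (simp only: of_nat_eq_iff)
  with assms(3) have "n = 2 * k + 1"
    by arith
  with assms(2) show False
    by simp
qed

lemma kac_eigenvalues: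
  fixes y :: complex
  assumes "y \<noteq> 0"
  obtains S where "card S = n" "even n \<Longrightarrow> 0 \<notin> S"
    "\<And>\<mu>. \<mu> \<in> S \<Longrightarrow> \<exists>G. degree G < n \<and> coeff G 0 = 1 \<and> kac_diff_op n y G = smult \<mu> G"
proof -
  define a where "a = csqrt y"
  have a: "a\<^sup>2 = y" "a \<noteq> 0"
    using assms by (auto simp: a_def)
  show thesis
  proof (rule that[of "kac_eigenvalue a n ` {..<n}"])
    show "card (kac_eigenvalue a n ` {..<n}) = n"
      using inj_on_kac_eigenvalue[OF a(2)] by (simp add: card_image)
    show "0 \<notin> kac_eigenvalue a n ` {..<n}" if "even n"
      using kac_eigenvalue_nonzero[OF a(2) that] by auto
    show "\<exists>G. degree G < n \<and> coeff G 0 = 1 \<and> kac_diff_op n y G = smult \<mu> G"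
      if \<mu>: "\<mu> \<in> kac_eigenvalue a n ` {..<n}" for \<mu>
    proof -
      obtain k where "k < n" "\<mu> = kac_eigenvalue a n k"
        using \<mu> by auto
      then show ?thesis
        using degree_kac_eigenpoly coeff_0_kac_eigenpoly kac_diff_op_eigenpoly[OF a(1)] by blast
    qed
  qed
qed

definition kac_null_poly :: "nat \<Rightarrow> 'a::idom \<Rightarrow> 'a poly" where
  "kac_null_poly n y = [:1, 0, -y:] ^ ((n - 1) div 2)"

lemma kac_diff_op_null_poly:
  assumes "odd n"
  shows "kac_diff_op n y (kac_null_poly n y) = 0"
proof -
  define p where "p = (n - 1) div 2"
  have "n - 1 = 2 * p"
    using assms by (auto simp: p_def elim!: oddE)
  then have coeffs: "smult (of_nat p) [:0, - (2 * y):] = [:0, - (of_nat (n - 1) * y):]"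
    by (simp add: algebra_simps)
  have "[:1, 0, -y:] * pderiv ([:1, 0, -y:] ^ p) = [:1, 0, -y:] ^ p * smult (of_nat p) [:0, - (2 * y):]"
    unfolding mult_pderiv_power by (simp add: pderiv_pCons mult_smult_right)
  then have "kac_diff_op n y ([:1, 0, -y:] ^ p) = smult 0 ([:1, 0, -y:] ^ p)"
    unfolding kac_diff_op_eigen_iff coeffs by simp
  then show ?thesis
    by (simp add: kac_null_poly_def p_def)
qed

lemma degree_kac_null_poly:
  assumes "odd n"
  shows "degree (kac_null_poly n y) < n"
proof -
  have "degree (kac_null_poly n y) \<le> 2 * ((n - 1) div 2)"
    unfolding kac_null_poly_def by (rule degree_power_le[THEN order_trans]) simp
  then show ?thesis
    using assms by (auto elim!: oddE)
qed

lemma coeff_0_kac_null_poly: "coeff (kac_null_poly n y) 0 = 1"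
  by (simp add: kac_null_poly_def coeff_0_power)

lemma coeff_power_even_quadratic:
  assumes "odd i"
  shows "coeff ([:1, 0, c:] ^ p) i = 0"
  using assms
proof (induction p arbitrary: i)
  case (Suc p)
  have "[:1, 0, c:] ^ Suc p = [:1, 0, c:] ^ p + pCons 0 (pCons 0 (smult c ([:1, 0, c:] ^ p)))"
    by (simp add: mult_pCons_left)
  then show ?case
    using Suc by (auto simp: coeff_pCons split: nat.split)
qed (auto intro: odd_pos)

lemma sum_lessThan_double: "(\<Sum>i<2 * p. f i) = (\<Sum>k<p. f (2 * k) + f (2 * (k :: nat) + 1))"
  by (induction p) (simp_all add: add.assoc)

lemma e1_kac_pow_null_relation:
  fixes y :: "'a::idom"
  assumes "odd n" "0 < r"
  shows "e1_kac_pow n y r 0 =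
    (\<Sum>k<(n - 1) div 2. - coeff (kac_null_poly n y) (2 * k + 2) * e1_kac_pow n y r (2 * k + 2))"
proof -
  let ?Z = "kac_null_poly n y"
  define p where "p = (n - 1) div 2"
  have n: "n = Suc (2 * p)"
    using assms(1) by (auto simp: p_def elim!: oddE)
  have "kac_diff_op n y ?Z = smult 0 ?Z"
    using kac_diff_op_null_poly[OF assms(1)] by simp
  then have "(\<Sum>i<n. e1_kac_pow n y r i * coeff ?Z i) = 0 ^ r"
    by (rule e1_kac_pow_eigen[OF degree_kac_null_poly[OF assms(1)] _ coeff_0_kac_null_poly])
  with assms(2) have "(\<Sum>i<n. e1_kac_pow n y r i * coeff ?Z i) = 0"
    by simp
  moreover have "(\<Sum>i<n. e1_kac_pow n y r i * coeff ?Z i) =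
      e1_kac_pow n y r 0 + (\<Sum>k<p. e1_kac_pow n y r (2 * k + 2) * coeff ?Z (2 * k + 2))"
    unfolding n sum.lessThan_Suc_shift sum_lessThan_double
    by (simp add: kac_null_poly_def coeff_0_power coeff_power_even_quadratic)
  ultimately show ?thesis
    by (simp add: p_def sum_negf eq_neg_iff_add_eq_0 mult.commute)
qed

section \<open>Powers of the Kac matrix of the second type\<close>

lemma kac2_carrier: "kac2 m n x y \<in> carrier_mat (m * n) (m * n)"
  by (simp add: kac2_def)

lemma dim_row_kac2 [simp]: "dim_row (kac2 m n x y) = m * n"
  by (simp add: kac2_def)

lemma block_index_less:
  fixes a b m n :: nat
  assumes "a < n" "b < m"
  shows "b * n + a < m * n"
proof -
  have "Suc b * n \<le> m * n"
    using assms(2) by (intro mult_le_mono1) simp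
  then show ?thesis
    using assms(1) by simp
qed

lemma index_kac2:
  assumes "a < n" "i < n" "b < m" "j < m"
  shows "kac2 m n 0 y $$ (b * n + a, j * n + i) =
    (if b = j then kac_elem n y a i else 0) + (if j = Suc b \<and> a = i then real j else 0)"
proof -
  have div_mod: "(b * n + a) div n = b" "(b * n + a) mod n = a" "(j * n + i) div n = j" "(j * n + i) mod n = i"
    using assms by auto
  have rows: "b * n + a < m * n" and cols: "j * n + i < m * n"
    using assms by (simp_all add: block_index_less)
  have "kac2 m n 0 y $$ (b * n + a, j * n + i) = (if b = j then kac n y $$ (a, i)
      else if j + 1 = b then (if a = i then real (m - b) * 0 else 0)
      else if j = b + 1 then (if a = i then real (b + 1) else 0)
      else 0)"
    unfolding kac2_def index_mat(1)[OF rows cols] case_prod_conv Let_def div_mod by (rule refl)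
  then show ?thesis
    using assms by (simp add: index_kac)
qed

lemma sum_blocks: "(\<Sum>p<m * n. f p) = (\<Sum>b<m. \<Sum>a<n. f (b * n + a :: nat))"
proof -
  have "(\<Sum>a<n. f (b * n + a)) = sum f {b * n..<b * n + n}" for b
    using sum.shift_bounds_nat_ivl[of f 0 "b * n" n] by (simp add: atLeast0LessThan add.commute)
  then show ?thesis
    by (simp add: sum.nat_group)
qed

lemma sum_mult_kac2_col:
  fixes w :: "nat \<Rightarrow> real"
  assumes "j < m" "i < n"
  shows "(\<Sum>p<m * n. w p * kac2 m n 0 y $$ (p, j * n + i)) =
    (\<Sum>a<n. w (j * n + a) * kac_elem n y a i) + (if j = 0 then 0 else real j * w ((j - 1) * n + i))"
proof -
  have block_sum: "(\<Sum>a<n. w (b * n + a) * kac2 m n 0 y $$ (b * n + a, j * n + i)) =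
      (if b = j then (\<Sum>a<n. w (j * n + a) * kac_elem n y a i) else 0)
      + (if j = Suc b then real j * w (b * n + i) else 0)" if b: "b < m" for b
  proof (cases "b = j")
    case True
    then show ?thesis using assms by (simp add: index_kac2)
  next
    case False
    show ?thesis
    proof (cases "j = Suc b")
      case True
      have entry: "kac2 m n 0 y $$ (b * n + a, j * n + i) = (if a = i then real j else 0)" if "a < n" for a
        using index_kac2[OF that assms(2) b assms(1)] True False by simp
      have "(\<Sum>a<n. w (b * n + a) * kac2 m n 0 y $$ (b * n + a, j * n + i)) =
          (\<Sum>a<n. if a = i then real j * w (b * n + a) else 0)"
        by (intro sum.cong refl) (simp add: entry)
      then show ?thesis using True False assms by simp
    next
      case False
      then show ?thesis using \<open>b \<noteq> j\<close> assms b by (simp add: index_kac2)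
    qed
  qed
  have "(\<Sum>p<m * n. w p * kac2 m n 0 y $$ (p, j * n + i)) =
      (\<Sum>b<m. (if b = j then (\<Sum>a<n. w (j * n + a) * kac_elem n y a i) else 0)
        + (if j = Suc b then real j * w (b * n + i) else 0))"
    unfolding sum_blocks by (intro sum.cong refl) (simp add: block_sum)
  also have "\<dots> = (\<Sum>a<n. w (j * n + a) * kac_elem n y a i) + (if j = 0 then 0 else real j * w ((j - 1) * n + i))"
    using assms by (cases j) (simp_all add: sum.distrib)
  finally show ?thesis .
qed

lemma pow_mat_Suc_index:
  assumes "Q \<in> carrier_mat N N" "i < N" "q < N"
  shows "(Q ^\<^sub>m Suc t) $$ (i, q) = (\<Sum>p<N. (Q ^\<^sub>m t) $$ (i, p) * Q $$ (p, q))"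
proof -
  have "Q ^\<^sub>m t \<in> carrier_mat N N" using assms(1) by simp
  then show ?thesis
    using assms by (simp add: scalar_prod_def lessThan_atLeast0)
qed

lemma binomial_fact_e1_kac_pow_Suc:
  "real (Suc t choose j) * fact j * e1_kac_pow n y (Suc t - j) i =
     (\<Sum>a<n. real (t choose j) * fact j * e1_kac_pow n y (t - j) a * kac_elem n y a i)
     + (if j = 0 then 0 else real j * (real (t choose (j - 1)) * fact (j - 1) * e1_kac_pow n y (t - (j - 1)) i))"
proof (cases j)
  case 0
  then show ?thesis by (simp add: mult_ac)
next
  case (Suc j')
  consider "t < j'" | "t = j'" | "j' < t" by arith
  then show ?thesis
  proof cases
    case 1
    then show ?thesis using Suc by (simp add: binomial_eq_0)
  next
    case 2
    then show ?thesis using Suc by (simp add: binomial_eq_0)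
  next
    case 3
    then have "Suc t - j = Suc (t - j)" "t - (j - 1) = Suc (t - j)" using Suc by auto
    moreover have "(\<Sum>a<n. real (t choose j) * fact j * e1_kac_pow n y (t - j) a * kac_elem n y a i) =
        real (t choose j) * fact j * e1_kac_pow n y (Suc (t - j)) i"
      by (simp add: sum_distrib_left mult.assoc)
    ultimately show ?thesis
      using Suc by (simp add: algebra_simps)
  qed
qed

lemma kac2_pow_first_row:
  assumes "j < m" "i < n"
  shows "(kac2 m n 0 y ^\<^sub>m t) $$ (0, j * n + i) = real (t choose j) * fact j * e1_kac_pow n y (t - j) i"
  using assms
proof (induction t arbitrary: j i)
  case 0
  have "j * n + i < m * n" by (rule block_index_less[OF 0(2,1)])
  then show ?case using 0 by (cases j) auto
next
  case (Suc t)
  let ?W = "\<lambda>p. (kac2 m n 0 y ^\<^sub>m t) $$ (0, p)"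
  have "(kac2 m n 0 y ^\<^sub>m Suc t) $$ (0, j * n + i) = (\<Sum>p<m * n. ?W p * kac2 m n 0 y $$ (p, j * n + i))"
    using Suc.prems by (intro pow_mat_Suc_index kac2_carrier block_index_less) auto
  also have "\<dots> = (\<Sum>a<n. ?W (j * n + a) * kac_elem n y a i) + (if j = 0 then 0 else real j * ?W ((j - 1) * n + i))"
    using Suc.prems by (rule sum_mult_kac2_col)
  also have "\<dots> = real (Suc t choose j) * fact j * e1_kac_pow n y (Suc t - j) i"
    using Suc.prems by (simp add: Suc.IH binomial_fact_e1_kac_pow_Suc)
  finally show ?case .
qed

lemma kac2_pow_block_relation:
  fixes y :: real
  assumes "odd n" "j < m" "j < t"
  shows "(kac2 m n 0 y ^\<^sub>m t) $$ (0, j * n) =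
    (\<Sum>k<(n - 1) div 2. - coeff (kac_null_poly n y) (2 * k + 2) * (kac2 m n 0 y ^\<^sub>m t) $$ (0, j * n + (2 * k + 2)))"
proof -
  let ?c = "real (t choose j) * fact j" and ?Z = "kac_null_poly n y"
  have n: "0 < n" using assms(1) by (rule odd_pos)
  have "(kac2 m n 0 y ^\<^sub>m t) $$ (0, j * n) = ?c * e1_kac_pow n y (t - j) 0"
    using kac2_pow_first_row[OF assms(2) n] by simp
  also have "\<dots> = ?c * (\<Sum>k<(n - 1) div 2. - coeff ?Z (2 * k + 2) * e1_kac_pow n y (t - j) (2 * k + 2))"
    using e1_kac_pow_null_relation[OF assms(1), of "t - j" y] assms(3) by simp
  also have "\<dots> = (\<Sum>k<(n - 1) div 2. - coeff ?Z (2 * k + 2) * (kac2 m n 0 y ^\<^sub>m t) $$ (0, j * n + (2 * k + 2)))"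
  proof -
    have "(kac2 m n 0 y ^\<^sub>m t) $$ (0, j * n + (2 * k + 2)) = ?c * e1_kac_pow n y (t - j) (2 * k + 2)"
      if "k < (n - 1) div 2" for k
    proof -
      have "2 * k + 2 < n"
        using that assms(1) by (auto elim!: oddE)
      then show ?thesis
        by (rule kac2_pow_first_row[OF assms(2)])
    qed
    then have "(\<Sum>k<(n - 1) div 2. - coeff ?Z (2 * k + 2) * (kac2 m n 0 y ^\<^sub>m t) $$ (0, j * n + (2 * k + 2))) =
        (\<Sum>k<(n - 1) div 2. - coeff ?Z (2 * k + 2) * (?c * e1_kac_pow n y (t - j) (2 * k + 2)))"
      by (intro sum.cong refl) (simp only: lessThan_iff)
    then show ?thesis
      by (simp add: sum_distrib_left mult_ac)
  qed
  finally show ?thesis .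
qed

section \<open>Root multiplicities forced by a linear relation\<close>

lemma higher_pderiv_monom_binomial:
  "(pderiv ^^ j) (monom (c :: 'a::idom) t) = monom (of_nat ((t choose j) * fact j) * c) (t - j)"
proof (induction j)
  case (Suc j)
  have "(t - j) * (t choose j) = Suc j * (t choose Suc j)"
    by (metis binomial_absorb_comp binomial_absorption)
  then have "(t - j) * ((t choose j) * fact j) = (t choose Suc j) * fact (Suc j)"
    unfolding fact_Suc mult.assoc[symmetric] by (simp add: mult_ac)
  then show ?case
    using Suc by (simp add: pderiv_monom mult.assoc flip: of_nat_mult)
qed simp

lemma order_ge_if_higher_pderiv_roots:
  fixes p :: "'a::{idom, semiring_char_0} poly"
  assumes "p \<noteq> 0" "\<And>j. j < m \<Longrightarrow> poly ((pderiv ^^ j) p) x = 0"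
  shows "m \<le> order x p"
  using assms
proof (induction m arbitrary: p)
  case (Suc m)
  have root: "poly p x = 0"
    using Suc.prems(2)[of 0] by simp
  have "pderiv p \<noteq> 0"
  proof
    assume "pderiv p = 0"
    then obtain c where "p = [:c:]"
      by (metis degree_eq_zeroE pderiv_eq_0_iff)
    then show False using root Suc.prems(1) by simp
  qed
  moreover have "poly ((pderiv ^^ j) (pderiv p)) x = 0" if "j < m" for j
    using Suc.prems(2)[of "Suc j"] that by (simp add: funpow_Suc_right del: funpow.simps)
  ultimately have "m \<le> order x (pderiv p)"
    by (rule Suc.IH)
  then show ?case
    using order_pderiv[OF Suc.prems(1) root] by simp
qed simp

lemma card_mult_le_degree_if_orders:
  fixes p :: "'a::idom poly"
  assumes "p \<noteq> 0" "finite S" "\<And>x. x \<in> S \<Longrightarrow> m \<le> order x p"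
  shows "card S * m \<le> degree p"
proof (cases "m = 0")
  case False
  then have roots: "S \<subseteq> {x. poly p x = 0}"
    using assms by (fastforce simp: order_root)
  have "card S * m = (\<Sum>x\<in>S. m)" by simp
  also have "\<dots> \<le> (\<Sum>x\<in>S. order x p)"
    using assms(3) by (intro sum_mono)
  also have "\<dots> \<le> (\<Sum>x | poly p x = 0. order x p)"
    using roots poly_roots_finite[OF assms(1)] by (intro sum_mono2) auto
  also have "\<dots> \<le> degree p"
    by (rule sum_order_le_degree[OF assms(1)])
  finally show ?thesis .
qed simp

lemma order_monom_mult:
  fixes p :: "'a::idom poly"
  assumes "x \<noteq> 0" "p \<noteq> 0"
  shows "order x (monom 1 s * p) = order x p"
proof -
  have "order x (monom 1 s) = 0"
    using assms(1) by (intro order_0I) (simp add: poly_monom)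
  then show ?thesis
    using assms(2) by (simp add: order_mult)
qed

lemma kac2_relation_higher_pderiv_root:
  fixes c :: "nat \<Rightarrow> real" and t :: "nat \<Rightarrow> nat" and G :: "complex poly"
  assumes rel: "\<And>q. q < m * n \<Longrightarrow> (\<Sum>l<L. c l * (kac2 m n 0 y ^\<^sub>m t l) $$ (0, q)) = 0"
    and "j < m"
    and G: "degree G < n" "kac_diff_op n (of_real y) G = smult \<mu> G" "coeff G 0 = 1"
  shows "poly ((pderiv ^^ j) (\<Sum>l<L. monom (complex_of_real (c l)) (t l))) \<mu> = 0"
proof -
  define d where "d l = complex_of_real (c l * (real (t l choose j) * fact j))" for l
  have block: "(\<Sum>l<L. d l * of_real (e1_kac_pow n y (t l - j) i)) = 0" if "i < n" for i
  proof -
    have "(\<Sum>l<L. c l * (real (t l choose j) * fact j * e1_kac_pow n y (t l - j) i)) = 0"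
      using rel[of "j * n + i"] that assms(2) by (simp add: kac2_pow_first_row block_index_less)
    then have "complex_of_real (\<Sum>l<L. c l * (real (t l choose j) * fact j * e1_kac_pow n y (t l - j) i)) = 0"
      by simp
    then show ?thesis
      by (simp add: d_def mult_ac)
  qed
  have "0 = (\<Sum>i<n. (\<Sum>l<L. d l * of_real (e1_kac_pow n y (t l - j) i)) * coeff G i)"
    using block by simp
  also have "\<dots> = (\<Sum>i<n. \<Sum>l<L. d l * (e1_kac_pow n (of_real y) (t l - j) i * coeff G i))"
    by (simp add: sum_distrib_right of_real_e1_kac_pow mult.assoc)
  also have "\<dots> = (\<Sum>l<L. d l * (\<Sum>i<n. e1_kac_pow n (of_real y) (t l - j) i * coeff G i))"
    by (subst sum.swap) (simp add: sum_distrib_left)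
  also have "\<dots> = (\<Sum>l<L. d l * \<mu> ^ (t l - j))"
    using e1_kac_pow_eigen[OF G] by simp
  also have "\<dots> = poly ((pderiv ^^ j) (\<Sum>l<L. monom (complex_of_real (c l)) (t l))) \<mu>"
    by (simp add: d_def higher_pderiv_sum higher_pderiv_monom_binomial poly_sum poly_monom mult_ac)
  finally show ?thesis by simp
qed

lemma kac2_relation_root_orders:
  fixes c :: "nat \<Rightarrow> real" and t :: "nat \<Rightarrow> nat"
  assumes "y \<noteq> 0"
    and rel: "\<And>q. q < m * n \<Longrightarrow> (\<Sum>l<L. c l * (kac2 m n 0 y ^\<^sub>m t l) $$ (0, q)) = 0"
    and P: "(\<Sum>l<L. monom (complex_of_real (c l)) (t l)) \<noteq> 0"
  obtains S where "card S = n" "even n \<Longrightarrow> 0 \<notin> S"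
    "\<And>\<mu>. \<mu> \<in> S \<Longrightarrow> m \<le> order \<mu> (\<Sum>l<L. monom (complex_of_real (c l)) (t l))"
proof -
  obtain S where S: "card S = n" "even n \<Longrightarrow> 0 \<notin> S"
    "\<And>\<mu>. \<mu> \<in> S \<Longrightarrow> \<exists>G. degree G < n \<and> coeff G 0 = 1 \<and> kac_diff_op n (complex_of_real y) G = smult \<mu> G"
    using kac_eigenvalues[of "complex_of_real y" n] assms(1) by auto
  show thesis
  proof (rule that[OF S(1,2)])
    fix \<mu> assume "\<mu> \<in> S"
    then obtain G where "degree G < n" "kac_diff_op n (of_real y) G = smult \<mu> G" "coeff G 0 = 1"
      using S(3) by blast
    then show "m \<le> order \<mu> (\<Sum>l<L. monom (complex_of_real (c l)) (t l))"
      using rel P by (intro order_ge_if_higher_pderiv_roots kac2_relation_higher_pderiv_root)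
  qed
qed

lemma kac2_pows_relation_poly_eq_0:
  fixes c :: "nat \<Rightarrow> real"
  assumes "0 < n" "0 < m" "y \<noteq> 0" "L \<le> m * n" "even n \<or> s + L \<le> m * n"
    and rel: "\<And>q. q < m * n \<Longrightarrow> (\<Sum>l<L. c l * (kac2 m n 0 y ^\<^sub>m (s + l)) $$ (0, q)) = 0"
  shows "(\<Sum>l<L. monom (complex_of_real (c l)) l) = 0" (is "?R = 0")
proof (rule ccontr)
  assume R: "?R \<noteq> 0"
  have P: "(\<Sum>l<L. monom (complex_of_real (c l)) (s + l)) = monom 1 s * ?R"
    by (simp add: sum_distrib_left mult_monom)
  have P0: "monom 1 s * ?R \<noteq> 0"
    using R by simp
  then have "(\<Sum>l<L. monom (complex_of_real (c l)) (s + l)) \<noteq> 0"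
    unfolding P .
  then obtain S where S: "card S = n" "even n \<Longrightarrow> 0 \<notin> S"
    "\<And>\<mu>. \<mu> \<in> S \<Longrightarrow> m \<le> order \<mu> (monom 1 s * ?R)"
    using kac2_relation_root_orders[where t = "\<lambda>l. s + l", OF assms(3) rel] unfolding P by blast
  have "finite S"
    using S(1) assms(1) by (intro card_ge_0_finite) simp
  have "degree ?R \<le> L - 1"
    by (intro degree_sum_le) (auto intro: order_trans[OF degree_monom_le])
  then have degR: "degree ?R < L"
    using R by (cases L) auto
  from assms(5) show False
  proof
    assume "even n"
    have "m \<le> order \<mu> ?R" if "\<mu> \<in> S" for \<mu>
    proof -
      have "\<mu> \<noteq> 0"
        using S(2)[OF \<open>even n\<close>] that by auto
      then have "order \<mu> (monom 1 s * ?R) = order \<mu> ?R"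
        by (rule order_monom_mult[OF _ R])
      with S(3)[OF that] show ?thesis
        by simp
    qed
    then have "card S * m \<le> degree ?R"
      by (rule card_mult_le_degree_if_orders[OF R \<open>finite S\<close>])
    then show False
      using S(1) degR assms(4) by (simp add: mult.commute)
  next
    assume "s + L \<le> m * n"
    have "card S * m \<le> degree (monom 1 s * ?R)"
      by (rule card_mult_le_degree_if_orders[OF P0 \<open>finite S\<close> S(3)])
    also have "\<dots> \<le> s + degree ?R"
      using degree_mult_le[of "monom 1 s" ?R] by (simp add: degree_monom_eq)
    finally show False
      using S(1) degR \<open>s + L \<le> m * n\<close> by (simp add: mult.commute)
  qed
qed

section \<open>Linear (in)dependence of the rows \<open>e\<^sub>1 Q\<^sup>t\<close>\<close>

lemma e1Q_index:
  assumes "Q \<in> carrier_mat N N" "q < N"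
  shows "e1Q Q s $ q = (Q ^\<^sub>m s) $$ (0, q)"
proof -
  have Qs: "Q ^\<^sub>m s \<in> carrier_mat N N" using assms(1) by simp
  then have "e1Q Q s $ q = unit_vec N 0 \<bullet> col (Q ^\<^sub>m s) q"
    using assms unfolding e1Q_def by simp
  also have "\<dots> = (Q ^\<^sub>m s) $$ (0, q)"
    using assms Qs by simp
  finally show ?thesis .
qed

lemma lin_indep_list_map_e1Q:
  assumes "Q \<in> carrier_mat N N"
  shows "lin_indep_list N (map (e1Q Q) ts) \<longleftrightarrow>
    (\<forall>c. (\<forall>q<N. (\<Sum>l<length ts. c l * (Q ^\<^sub>m (ts ! l)) $$ (0, q)) = 0) \<longrightarrow> (\<forall>l<length ts. c l = 0))"
  unfolding lin_indep_list_def using assms by (simp add: e1Q_index)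

lemma lin_indep_list_kac2_pows:
  assumes "0 < n" "0 < m" "y \<noteq> 0" "L \<le> m * n" "even n \<or> s + L \<le> m * n"
  shows "lin_indep_list (m * n) (map (e1Q (kac2 m n 0 y)) [s..<s + L])"
  unfolding lin_indep_list_map_e1Q[OF kac2_carrier]
proof (intro allI impI)
  fix c :: "nat \<Rightarrow> real" and l
  assume rel: "\<forall>q<m * n. (\<Sum>l<length [s..<s + L]. c l * (kac2 m n 0 y ^\<^sub>m ([s..<s + L] ! l)) $$ (0, q)) = 0"
    and l: "l < length [s..<s + L]"
  have "(\<Sum>l<L. monom (complex_of_real (c l)) l) = 0"
    using rel by (intro kac2_pows_relation_poly_eq_0[OF assms]) simp
  then have "coeff (\<Sum>l<L. monom (complex_of_real (c l)) l) l = 0"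
    by simp
  then show "c l = 0"
    using l by (simp add: coeff_sum)
qed

lemma exists_nontrivial_relation:
  fixes F :: "nat \<Rightarrow> nat \<Rightarrow> 'a::idom"
  assumes "finite J" "card J < L"
  shows "\<exists>c. (\<exists>l<L. c l \<noteq> 0) \<and> (\<forall>j\<in>J. (\<Sum>l<L. c l * F l j) = 0)"
proof -
  obtain g where g: "bij_betw g {0..<card J} J"
    using ex_bij_betw_nat_finite[OF assms(1)] by blast
  define A where "A = mat\<^sub>r L L (\<lambda>r. if r = card J then 0\<^sub>v L else vec L (\<lambda>l. F l (g r)))"
  have A: "A \<in> carrier_mat L L" by (simp add: A_def)
  have "det A = 0"
    unfolding A_def by (rule det_row_0[OF assms(2)]) auto
  then obtain v where v: "v \<in> carrier_vec L" "v \<noteq> 0\<^sub>v L" "A *\<^sub>v v = 0\<^sub>v L"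
    using det_0_iff_vec_prod_zero[OF A] by blast
  have "\<exists>l<L. v $ l \<noteq> 0"
  proof (rule ccontr)
    assume "\<not> (\<exists>l<L. v $ l \<noteq> 0)"
    then have "v = 0\<^sub>v L" using v(1) by (intro eq_vecI) auto
    with v(2) show False ..
  qed
  moreover have "(\<Sum>l<L. v $ l * F l j) = 0" if "j \<in> J" for j
  proof -
    have "j \<in> g ` {0..<card J}"
      using g that by (simp add: bij_betw_def)
    then obtain r where r: "r < card J" "j = g r"
      by auto
    then have "(\<Sum>l<L. v $ l * F l j) = (A *\<^sub>v v) $ r"
      using assms(2) v(1) by (simp add: A_def scalar_prod_def lessThan_atLeast0 mult.commute)
    also have "\<dots> = 0"
      using v(3) r assms(2) by simp
    finally show ?thesis .
  qed
  ultimately show ?thesis by blast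
qed

lemma not_lin_indep_list_if_few_free_coords:
  assumes "finite J" "card J < length vs"
    and "\<And>q. q < N \<Longrightarrow> q \<notin> J \<Longrightarrow>
      \<exists>p w h. (\<forall>i<(p :: nat). h i \<in> J) \<and> (\<forall>v\<in>set vs. v $ q = (\<Sum>i<p. w i * v $ h i))"
  shows "\<not> lin_indep_list N vs"
proof
  assume indep: "lin_indep_list N vs"
  obtain c where c: "\<exists>l<length vs. c l \<noteq> 0" "\<And>j. j \<in> J \<Longrightarrow> (\<Sum>l<length vs. c l * vs ! l $ j) = 0"
    using exists_nontrivial_relation[OF assms(1,2), of "\<lambda>l j. vs ! l $ j"] by blast
  have "(\<Sum>l<length vs. c l * vs ! l $ q) = 0" if q: "q < N" for q
  proof (cases "q \<in> J")
    case False
    then obtain p :: nat and w h where h: "\<forall>i<p. h i \<in> J"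
      and comb: "\<forall>v\<in>set vs. v $ q = (\<Sum>i<p. w i * v $ h i)"
      using assms(3) q by blast
    have "(\<Sum>l<length vs. c l * vs ! l $ q) = (\<Sum>l<length vs. \<Sum>i<p. w i * (c l * vs ! l $ h i))"
      by (intro sum.cong refl) (simp add: comb[rule_format, OF nth_mem] sum_distrib_left mult_ac)
    also have "\<dots> = (\<Sum>i<p. w i * (\<Sum>l<length vs. c l * vs ! l $ h i))"
      by (subst sum.swap) (simp add: sum_distrib_left)
    also have "\<dots> = 0"
      using h c(2) by simp
    finally show ?thesis .
  qed (use c(2) in simp)
  then show False
    using indep c(1) unfolding lin_indep_list_def by blast
qed

lemma kac2_pows_not_lin_indep:
  assumes "odd n" "1 < m" "\<And>t. t \<in> set ts \<Longrightarrow> 1 < t" "m * n - 2 < length ts"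
  shows "\<not> lin_indep_list (m * n) (map (e1Q (kac2 m n 0 y)) ts)"
proof (rule not_lin_indep_list_if_few_free_coords)
  let ?Q = "kac2 m n 0 y" and ?J = "{..<m * n} - {0, n}" and ?Z = "kac_null_poly n y"
  have n: "0 < n" using assms(1) by (rule odd_pos)
  have "n < m * n" using assms(2) n by simp
  then show "finite ?J" "card ?J < length (map (e1Q ?Q) ts)"
    using assms(4) n by (simp_all add: card_Diff_subset)
  fix q assume q: "q < m * n" "q \<notin> ?J"
  obtain j where j: "j < 2" "q = j * n"
  proof -
    have "q = 0 \<or> q = n" using q by auto
    then show thesis using that[of 0] that[of 1] by auto
  qed
  have free: "\<forall>k<(n - 1) div 2. j * n + (2 * k + 2) \<in> ?J"
  proof (intro allI impI)
    fix k assume "k < (n - 1) div 2"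
    then have "2 * k + 2 < n" using assms(1) by (auto elim!: oddE)
    moreover have "(j + 1) * n \<le> m * n" using j(1) assms(2) by (intro mult_le_mono1) simp
    ultimately show "j * n + (2 * k + 2) \<in> ?J" using j(1) by (auto simp: less_2_cases_iff)
  qed
  have rel: "\<forall>v\<in>set (map (e1Q ?Q) ts).
      v $ q = (\<Sum>k<(n - 1) div 2. - coeff ?Z (2 * k + 2) * v $ (j * n + (2 * k + 2)))"
  proof
    fix v assume "v \<in> set (map (e1Q ?Q) ts)"
    then obtain t where t: "t \<in> set ts" "v = e1Q ?Q t" by auto
    have "j < m" "j < t" using j(1) assms(2) assms(3)[OF t(1)] by simp_all
    then show "v $ q = (\<Sum>k<(n - 1) div 2. - coeff ?Z (2 * k + 2) * v $ (j * n + (2 * k + 2)))"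
      using kac2_pow_block_relation[OF assms(1)] free q(1) j(2) t(2) by (simp add: e1Q_index[OF kac2_carrier])
  qed
  show "\<exists>p w h. (\<forall>i<(p :: nat). h i \<in> ?J) \<and> (\<forall>v\<in>set (map (e1Q ?Q) ts). v $ q = (\<Sum>i<p. w i * v $ h i))"
    by (rule exI[of _ "(n - 1) div 2"], rule exI[of _ "\<lambda>k. - coeff ?Z (2 * k + 2)"],
        rule exI[of _ "\<lambda>k. j * n + (2 * k + 2)"]) (use free rel in blast)
qed

lemma in_span_list_col_mat_of_rows:
  assumes "j < N" "\<And>i. i < p \<Longrightarrow> f i < N" "\<And>v. v \<in> set vs \<Longrightarrow> v $ j = (\<Sum>i<p. w i * v $ f i)"
  shows "in_span_list (length vs) (col (mat_of_rows N vs) j) (map (\<lambda>i. col (mat_of_rows N vs) (f i)) [0..<p])"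
  unfolding in_span_list_def
proof (intro exI allI impI)
  fix r assume r: "r < length vs"
  then show "col (mat_of_rows N vs) j $ r = (\<Sum>i<length (map (\<lambda>i. col (mat_of_rows N vs) (f i)) [0..<p]).
      w i * map (\<lambda>i. col (mat_of_rows N vs) (f i)) [0..<p] ! i $ r)"
    using assms by (simp add: mat_of_rows_index)
qed

lemma kac2_pows_block_col_in_span:
  fixes y :: real
  assumes "odd n" "j < m" "\<And>t. t \<in> set ts \<Longrightarrow> j < t"
  defines "M \<equiv> mat_of_rows (m * n) (map (e1Q (kac2 m n 0 y)) ts)"
  shows "in_span_list (length ts) (col M (j * n)) (map (\<lambda>k. col M (j * n + (2 * k + 2))) [0..<(n - 1) div 2])"
proof -
  let ?Q = "kac2 m n 0 y" and ?Z = "kac_null_poly n y"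
  have n: "0 < n" using assms(1) by (rule odd_pos)
  have bound: "j * n + (2 * k + 2) < m * n" if "k < (n - 1) div 2" for k
  proof -
    have "2 * k + 2 < n" using that assms(1) by (auto elim!: oddE)
    then show ?thesis by (rule block_index_less[OF _ assms(2)])
  qed
  have jn: "j * n < m * n"
    using block_index_less[OF n assms(2)] by simp
  have rel: "v $ (j * n) = (\<Sum>k<(n - 1) div 2. - coeff ?Z (2 * k + 2) * v $ (j * n + (2 * k + 2)))"
    if v: "v \<in> set (map (e1Q ?Q) ts)" for v
  proof -
    obtain t where t: "t \<in> set ts" "v = e1Q ?Q t" using v by auto
    then show ?thesis
      using kac2_pow_block_relation[OF assms(1,2) assms(3)[OF t(1)]] bound jn
      by (simp add: e1Q_index[OF kac2_carrier])
  qed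
  show ?thesis
    using in_span_list_col_mat_of_rows[where vs = "map (e1Q ?Q) ts", OF jn bound rel]
    by (simp add: M_def)
qed

lemma map_upt_1_Suc: "map f [1..<q + 1] = map (\<lambda>k. f (Suc k)) [0..<q]"
  by (induction q) simp_all

lemma kac2_pows_odd_case:
  fixes y :: real
  assumes "odd n" "1 < m" "m * n \<le> s"
  defines "vs \<equiv> map (e1Q (kac2 m n 0 y)) [2..<m * n] @ [e1Q (kac2 m n 0 y) s]"
  defines "C \<equiv> \<lambda>j. col (mat_of_rows (m * n) vs) (j - 1)"
  shows "\<not> lin_indep_list (m * n) vs"
    and "in_span_list (m * n - 1) (C 1) (map (\<lambda>k. C (2 * k + 1)) [1..<(n - 1) div 2 + 1])"
    and "in_span_list (m * n - 1) (C (n + 1)) (map (\<lambda>k. C (n + 1 + 2 * k)) [1..<(n - 1) div 2 + 1])"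
proof -
  let ?ts = "[2..<m * n] @ [s]" and ?M = "mat_of_rows (m * n) vs"
  have "2 * 1 \<le> m * n"
    using assms(2) odd_pos[OF assms(1)] by (intro mult_le_mono) simp_all
  then have len: "length ?ts = m * n - 1"
    by simp
  have vs: "vs = map (e1Q (kac2 m n 0 y)) ?ts"
    by (simp add: vs_def)
  have exponents: "j < t" if "j < 2" "t \<in> set ?ts" for j t
    using that assms(3) \<open>2 * 1 \<le> m * n\<close> by auto
  show "\<not> lin_indep_list (m * n) vs"
    unfolding vs using len by (intro kac2_pows_not_lin_indep[OF assms(1,2) exponents[of 1]]) simp_all
  have span: "in_span_list (m * n - 1) (col ?M (j * n)) (map (\<lambda>k. col ?M (j * n + (2 * k + 2))) [0..<(n - 1) div 2])"
    if "j < 2" for j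
    using kac2_pows_block_col_in_span[where ts = ?ts and y = y, OF assms(1) _ exponents[OF that]]
      that assms(2) unfolding len vs by simp
  have reindex:
    "map (\<lambda>k. C (2 * k + 1)) [1..<(n - 1) div 2 + 1] = map (\<lambda>k. col ?M (0 * n + (2 * k + 2))) [0..<(n - 1) div 2]"
    "map (\<lambda>k. C (n + 1 + 2 * k)) [1..<(n - 1) div 2 + 1] = map (\<lambda>k. col ?M (1 * n + (2 * k + 2))) [0..<(n - 1) div 2]"
    unfolding map_upt_1_Suc C_def by (intro map_cong refl arg_cong[where f = "col ?M"]; simp)+
  show "in_span_list (m * n - 1) (C 1) (map (\<lambda>k. C (2 * k + 1)) [1..<(n - 1) div 2 + 1])"
    unfolding reindex(1) using span[of 0] by (simp add: C_def)
  show "in_span_list (m * n - 1) (C (n + 1)) (map (\<lambda>k. C (n + 1 + 2 * k)) [1..<(n - 1) div 2 + 1])"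
    unfolding reindex(2) using span[of 1] by (simp add: C_def)
qed

theorem lemma6:
  fixes n1 n2 :: nat and \<tau> :: real
  assumes "n1 \<ge> 2" and "n2 \<ge> 2" and "\<tau> \<noteq> 0"
  defines "N' \<equiv> (n1 + 1) * n2"
  defines "Q \<equiv> kac2 (n1 + 1) n2 0 \<tau>"
  shows
    "(even n2 \<longrightarrow>
       (\<forall>s::nat. s \<ge> 1 \<longrightarrow> lin_indep_list N' (map (\<lambda>k. e1Q Q (s + k)) [0..<N'])))
     \<and>
     (odd n2 \<longrightarrow> (\<forall>s::nat. s \<ge> N' \<longrightarrow>
       (let \<Lambda> = map (\<lambda>k. e1Q Q k) [2..<N'];
            M = mat_of_rows N' (\<Lambda> @ [e1Q Q s]);
            C = (\<lambda>j::nat. col M (j - 1))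
        in lin_indep_list N' \<Lambda>
           \<and> \<not> lin_indep_list N' (\<Lambda> @ [e1Q Q s])
           \<and> in_span_list (N' - 1) (C 1) (map (\<lambda>k. C (2 * k + 1)) [1..<(n2 - 1) div 2 + 1])
           \<and> in_span_list (N' - 1) (C (n2 + 1))
               (map (\<lambda>k. C (n2 + 1 + 2 * k)) [1..<(n2 - 1) div 2 + 1]))))"
proof -
  have m: "1 < n1 + 1" and n: "0 < n2"
    using assms(1,2) by simp_all
  have "3 * 2 \<le> N'"
    unfolding N'_def using assms(1,2) by (intro mult_le_mono) simp_all
  then have L: "2 + (N' - 2) = N'"
    by simp
  have "lin_indep_list N' (map (e1Q Q) [s..<s + N'])" if "even n2" for s
    using lin_indep_list_kac2_pows[of n2 "n1 + 1" \<tau> N' s] that n assms(3) unfolding N'_def Q_def by simp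
  moreover have "map (\<lambda>k. e1Q Q (s + k)) [0..<N'] = map (e1Q Q) [s..<s + N']" for s
    by (rule nth_equalityI) auto
  moreover have "lin_indep_list N' (map (e1Q Q) [2..<N'])"
    using lin_indep_list_kac2_pows[of n2 "n1 + 1" \<tau> "N' - 2" 2, unfolded L] n assms(3)
    unfolding N'_def Q_def by simp
  moreover note kac2_pows_odd_case[where y = \<tau> and n = n2 and m = "n1 + 1", OF _ m]
  ultimately show ?thesis
    unfolding Let_def N'_def Q_def by simp
qed

end
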